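(* For every integer $n\ge 2$, the chromatic number of $H_2(n,n-1)$ equals $4$.
   Context: For $x,y\in\mathbb{Z}_2^n$, $\mathrm{d}(x,y)=|\{i: x_i\neq y_i\}|$ is the Hamming distance. $H_2(n,n-1)$ is the simple undirected graph with vertex set $\mathbb{Z}_2^n$ in which $x,y$ are adjacent iff $\mathrm{d}(x,y)\ge n-1$. *)

theory Defs
  imports Main
begin

text \<open>Vertices of Z_2^n: boolean lists of length n.\<close>
definition cube :: "nat \<Rightarrow> bool list set" where
  "cube n = {x. length x = n}"

definition hamming :: "bool list \<Rightarrow> bool list \<Rightarrow> nat" where
  "hamming x y = card {i. i < length x \<and> x ! i \<noteq> y ! i}"

text \<open>Adjacency of H_2(n,n-1) (simple graph: no loops).\<close>
definition H2_adj :: "nat \<Rightarrow> bool list \<Rightarrow> bool list \<Rightarrow> bool" where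
  "H2_adj n x y \<longleftrightarrow> x \<noteq> y \<and> hamming x y \<ge> n - 1"

definition proper_colouring :: "'a set \<Rightarrow> ('a \<Rightarrow> 'a \<Rightarrow> bool) \<Rightarrow> nat \<Rightarrow> ('a \<Rightarrow> nat) \<Rightarrow> bool" where
  "proper_colouring V E k c \<longleftrightarrow>
     (\<forall>v\<in>V. c v < k) \<and> (\<forall>u\<in>V. \<forall>v\<in>V. E u v \<longrightarrow> c u \<noteq> c v)"

definition chromatic_number :: "'a set \<Rightarrow> ('a \<Rightarrow> 'a \<Rightarrow> bool) \<Rightarrow> nat" where
  "chromatic_number V E = (LEAST k. \<exists>c. proper_colouring V E k c)"

end

theory Submission
  imports Defs
begin

text \<open>
  Embed the cube Q_d with its antipodal matching, d the even number among n-1, n,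
  into H_2(n,n-1): pad with zeros and complement the words of odd weight.
  Flipping one bit then changes the parity, so neighbours land at distance n-1,
  while antipodes keep their parity and land at distance d.

  It remains to show that Q_d plus antipodal edges has no 3-colouring for even d.
  Read a 3-colouring as a map to a triangle and orient the triangle.  Summing the signed
  steps (+1 or -1) along monotone paths from the origin gives a potential on the cube,
  well defined because every properly 3-coloured 4-cycle has total winding 0.  The potential
  is congruent to the colour modulo 3 and to the weight modulo 2.  The difference of the
  potentials at a vertex and at its antipode is therefore even (d even) and nonzero (the two
  colours differ), and it changes by at most 2 along each cube edge, so it keeps its sign on
  the connected cube.  But it is odd under the antipodal map.
\<close>

lemma proper_colouring_mono:
  "proper_colouring V E j c \<Longrightarrow> j \<le> k \<Longrightarrow> proper_colouring V E k c"
  unfolding proper_colouring_def by (meson order_less_le_trans)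

lemma proper_colouring_hom:
  assumes "proper_colouring V E k c" and "g ` V' \<subseteq> V"
    and "\<And>u v. u \<in> V' \<Longrightarrow> v \<in> V' \<Longrightarrow> E' u v \<Longrightarrow> E (g u) (g v)"
  shows "proper_colouring V' E' k (c \<circ> g)"
  using assms unfolding proper_colouring_def by (auto simp: image_subset_iff)

lemma chromatic_number_eqI:
  assumes "proper_colouring V E k c" and "\<And>j c'. proper_colouring V E j c' \<Longrightarrow> k \<le> j"
  shows "chromatic_number V E = k"
  unfolding chromatic_number_def by (rule Least_equality) (use assms in blast)+

section \<open>The cube with its antipodal matching is not 3-colourable\<close>

definition toggle :: "nat \<Rightarrow> bool list \<Rightarrow> bool list" where
  "toggle i x = x[i := \<not> x ! i]"

definition cube_adj :: "bool list \<Rightarrow> bool list \<Rightarrow> bool" where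
  "cube_adj x y \<longleftrightarrow> (\<exists>i < length x. y = toggle i x)"

lemma length_toggle [simp]: "length (toggle i x) = length x"
  by (simp add: toggle_def)

lemma toggle_Cons_0 [simp]: "toggle 0 (b # x) = (\<not> b) # x"
  by (simp add: toggle_def)

lemma toggle_Cons_Suc [simp]: "toggle (Suc i) (b # x) = b # toggle i x"
  by (simp add: toggle_def)

lemma map_Not_toggle: "map Not (toggle i x) = toggle i (map Not x)"
  by (cases "i < length x") (simp_all add: toggle_def map_update list_update_beyond)

lemma cube_colouring_lt:
  "proper_colouring (cube d) cube_adj k c \<Longrightarrow> length x = d \<Longrightarrow> c x < k"
  unfolding proper_colouring_def cube_def by blast

lemma cube_colouring_toggle:
  assumes "proper_colouring (cube d) cube_adj k c" "length x = d" "i < d"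
  shows "c (toggle i x) \<noteq> c x"
proof -
  have "cube_adj x (toggle i x)" using assms(2,3) by (auto simp: cube_adj_def)
  moreover have "x \<in> cube d" "toggle i x \<in> cube d" using assms(2) by (simp_all add: cube_def)
  ultimately show ?thesis using assms(1) unfolding proper_colouring_def by metis
qed

lemma cube_colouring_tail:
  assumes "proper_colouring (cube (Suc d)) cube_adj k c"
  shows "proper_colouring (cube d) cube_adj k (\<lambda>y. c (b # y))"
  unfolding proper_colouring_def cube_def cube_adj_def
proof (intro conjI ballI impI)
  fix x :: "bool list" assume "x \<in> {x. length x = d}"
  then show "c (b # x) < k" using cube_colouring_lt[OF assms, of "b # x"] by simp
next
  fix x y :: "bool list" assume "x \<in> {x. length x = d}" "\<exists>i < length x. y = toggle i x"
  then show "c (b # x) \<noteq> c (b # y)"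
    using cube_colouring_toggle[OF assms, of "b # x"] by force
qed

lemma toggle_connected:
  assumes step: "\<And>u i. length u = d \<Longrightarrow> i < d \<Longrightarrow> P u \<Longrightarrow> P (toggle i u)"
    and "length x = d" "length y = d" "P x"
  shows "P y"
proof -
  have "P (take k y @ drop k x)" if "k \<le> d" for k
    using that
  proof (induction k)
    case 0
    then show ?case using \<open>P x\<close> by simp
  next
    case (Suc k)
    let ?u = "take k y @ drop k x"
    have next_word: "take (Suc k) y @ drop (Suc k) x = (if y ! k = x ! k then ?u else toggle k ?u)"
      using Suc.prems assms(2,3)
      by (intro nth_equalityI) (auto simp: toggle_def nth_append nth_list_update min_def)
    show ?case
      unfolding next_word using Suc assms(2,3) by (auto intro: step)
  qed
  from this[of d] show ?thesis using assms(2,3) by simp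
qed

definition turn :: "nat \<Rightarrow> nat \<Rightarrow> int" where
  "turn a b = (if b = Suc a mod 3 then 1 else -1)"

lemma less_3_cases: "(a::nat) < 3 \<longleftrightarrow> a = 0 \<or> a = 1 \<or> a = 2"
  by auto

lemma turn_cases: "turn a b = 1 \<or> turn a b = -1"
  by (simp add: turn_def)

lemma turn_odd: "odd (turn a b)"
  by (simp add: turn_def)

lemma turn_antisym: "a < 3 \<Longrightarrow> b < 3 \<Longrightarrow> a \<noteq> b \<Longrightarrow> turn b a = - turn a b"
  unfolding less_3_cases by (elim disjE) (simp_all add: turn_def)

lemma turn_cong_diff: "a < 3 \<Longrightarrow> b < 3 \<Longrightarrow> a \<noteq> b \<Longrightarrow> 3 dvd turn a b - (int b - int a)"
  unfolding less_3_cases by (elim disjE) (simp_all add: turn_def)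

lemma turn_square:
  "a < 3 \<Longrightarrow> b < 3 \<Longrightarrow> c < 3 \<Longrightarrow> d < 3 \<Longrightarrow> a \<noteq> b \<Longrightarrow> b \<noteq> c \<Longrightarrow> c \<noteq> d \<Longrightarrow> d \<noteq> a
    \<Longrightarrow> turn a b + turn b c + turn c d + turn d a = 0"
  unfolding less_3_cases by (elim disjE) (simp_all add: turn_def)

text \<open>The sum of the turns along the path from the origin to b # x that first walks to
  False # x and then flips the head bit.\<close>
fun potential :: "(bool list \<Rightarrow> nat) \<Rightarrow> bool list \<Rightarrow> int" where
  "potential c [] = 0"
| "potential c (b # x) =
     potential (\<lambda>y. c (False # y)) x + (if b then turn (c (False # x)) (c (True # x)) else 0)"

definition weight :: "bool list \<Rightarrow> nat" where
  "weight x = length (filter id x)"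

lemma potential_parity: "even (potential c x - int (weight x))"
proof (induction x arbitrary: c)
  case Nil
  then show ?case by (simp add: weight_def)
next
  case (Cons b x)
  then show ?case
    using turn_odd[of "c (False # x)" "c (True # x)"] by (cases b) (auto simp: weight_def)
qed

lemma potential_toggle:
  assumes "proper_colouring (cube (length x)) cube_adj 3 c" "i < length x"
  shows "potential c (toggle i x) - potential c x = turn (c x) (c (toggle i x))"
  using assms
proof (induction x arbitrary: c i)
  case Nil
  then show ?case by simp
next
  case (Cons b x)
  note col = cube_colouring_lt[OF Cons.prems(1)] and adj = cube_colouring_toggle[OF Cons.prems(1)]
  have head: "c (True # x) \<noteq> c (False # x)" using adj[of "False # x" 0] by simp
  have lt: "c (True # x) < 3" "c (False # x) < 3" by (simp_all add: col)
  show ?case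
  proof (cases i)
    case 0
    then show ?thesis
      using turn_antisym[OF lt head] by (cases b) simp_all
  next
    case (Suc j)
    let ?y = "toggle j x"
    have j: "j < length x" using Cons.prems(2) Suc by simp
    have tail: "potential (\<lambda>z. c (False # z)) ?y - potential (\<lambda>z. c (False # z)) x
        = turn (c (False # x)) (c (False # ?y))"
      using Cons.IH[OF cube_colouring_tail j] Cons.prems(1) by simp
    show ?thesis
    proof (cases b)
      case False
      then show ?thesis using tail Suc by simp
    next
      case True
      have ne: "c (False # ?y) \<noteq> c (False # x)" "c (True # ?y) \<noteq> c (False # ?y)"
        "c (True # ?y) \<noteq> c (True # x)"
        using adj[of "False # x" "Suc j"] adj[of "False # ?y" 0] adj[of "True # x" "Suc j"] j
        by simp_all
      have "turn (c (False # x)) (c (False # ?y)) + turn (c (False # ?y)) (c (True # ?y))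
          + turn (c (True # ?y)) (c (True # x)) + turn (c (True # x)) (c (False # x)) = 0"
        using ne head by (intro turn_square) (simp_all add: col)
      moreover have "turn (c (True # x)) (c (False # x)) = - turn (c (False # x)) (c (True # x))"
        "turn (c (True # ?y)) (c (True # x)) = - turn (c (True # x)) (c (True # ?y))"
        using turn_antisym[OF lt head] turn_antisym[of "c (True # ?y)" "c (True # x)"] ne(3)
        by (simp_all add: col)
      ultimately show ?thesis using tail Suc True by simp
    qed
  qed
qed

lemma potential_cong_colour:
  assumes "proper_colouring (cube (length x)) cube_adj 3 c"
  shows "3 dvd potential c x - (int (c x) - int (c (replicate (length x) False)))"
  using assms
proof (induction x arbitrary: c)
  case Nil
  then show ?case by simp
next
  case (Cons b x)
  have tail: "3 dvd potential (\<lambda>z. c (False # z)) x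
      - (int (c (False # x)) - int (c (False # replicate (length x) False)))"
    using Cons.IH[OF cube_colouring_tail] Cons.prems by simp
  have head: "3 dvd turn (c (False # x)) (c (True # x)) - (int (c (True # x)) - int (c (False # x)))"
    using cube_colouring_toggle[OF Cons.prems, of "False # x" 0]
    by (intro turn_cong_diff cube_colouring_lt[OF Cons.prems]) auto
  show ?case
  proof (cases b)
    case True
    have "potential c (b # x) - (int (c (b # x)) - int (c (replicate (length (b # x)) False)))
      = (potential (\<lambda>z. c (False # z)) x
          - (int (c (False # x)) - int (c (False # replicate (length x) False))))
        + (turn (c (False # x)) (c (True # x)) - (int (c (True # x)) - int (c (False # x))))"
      using True by simp
    then show ?thesis using tail head by (metis dvd_add)
  qed (use tail in simp)
qed

definition antipodal_gap :: "(bool list \<Rightarrow> nat) \<Rightarrow> bool list \<Rightarrow> int" where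
  "antipodal_gap c x = potential c (map Not x) - potential c x"

lemma antipodal_gap_map_Not: "antipodal_gap c (map Not x) = - antipodal_gap c x"
  by (simp add: antipodal_gap_def comp_def)

lemma weight_map_Not: "weight (map Not x) + weight x = length x"
  unfolding weight_def by (induction x) auto

lemma even_antipodal_gap:
  assumes "even (length x)"
  shows "even (antipodal_gap c x)"
proof -
  have "antipodal_gap c x = (potential c (map Not x) - int (weight (map Not x)))
      - (potential c x - int (weight x)) + (int (length x) - 2 * int (weight x))"
    using weight_map_Not[of x] unfolding antipodal_gap_def by linarith
  moreover have "even (int (length x) - 2 * int (weight x))" using assms by simp
  ultimately show ?thesis
    using dvd_add[OF dvd_diff[OF potential_parity potential_parity]] by metis
qed

lemma antipodal_gap_not_dvd_3:
  assumes col: "proper_colouring (cube (length x)) cube_adj 3 c" and "c (map Not x) \<noteq> c x"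
  shows "\<not> 3 dvd antipodal_gap c x"
proof
  let ?c0 = "int (c (replicate (length x) False))"
  assume gap: "3 dvd antipodal_gap c x"
  have "3 dvd potential c (map Not x) - (int (c (map Not x)) - ?c0)"
    using potential_cong_colour[of "map Not x" c] col by simp
  moreover have "antipodal_gap c x - (int (c (map Not x)) - int (c x))
      = (potential c (map Not x) - (int (c (map Not x)) - ?c0))
        - (potential c x - (int (c x) - ?c0))"
    unfolding antipodal_gap_def by simp
  ultimately have "3 dvd antipodal_gap c x - (int (c (map Not x)) - int (c x))"
    using dvd_diff potential_cong_colour[OF col] by metis
  from dvd_diff[OF gap this] have "3 dvd int (c (map Not x)) - int (c x)"
    by simp
  moreover have "c (map Not x) < 3" "c x < 3"
    using cube_colouring_lt[OF col] by simp_all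
  ultimately show False
    using assms(2) unfolding less_3_cases by (elim disjE) simp_all
qed

lemma antipodal_gap_toggle:
  assumes "proper_colouring (cube (length x)) cube_adj 3 c" "i < length x"
  shows "\<bar>antipodal_gap c (toggle i x) - antipodal_gap c x\<bar> \<le> 2"
proof -
  have "antipodal_gap c (toggle i x) - antipodal_gap c x
      = turn (c (map Not x)) (c (toggle i (map Not x))) - turn (c x) (c (toggle i x))"
    using potential_toggle[OF assms] potential_toggle[of "map Not x" c i] assms
    by (simp add: antipodal_gap_def map_Not_toggle)
  then show ?thesis
    using turn_cases[of "c (map Not x)" "c (toggle i (map Not x))"] turn_cases[of "c x" "c (toggle i x)"]
    by (elim disjE) simp_all
qed

lemma even_nonzero_close_same_sign:
  fixes a b :: int
  assumes "even a" "even b" "a \<noteq> 0" "b \<noteq> 0" "\<bar>b - a\<bar> \<le> 2"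
  shows "0 < a \<longleftrightarrow> 0 < b"
proof -
  have "a \<noteq> 1" "a \<noteq> -1" "b \<noteq> 1" "b \<noteq> -1" using assms(1,2) by auto
  then show ?thesis using assms(3-5) by linarith
qed

lemma no_antipodal_cube_3_colouring:
  assumes "even d"
  shows "\<not> proper_colouring (cube d) (\<lambda>x y. cube_adj x y \<or> y = map Not x) 3 c"
proof
  assume antipodal_col: "proper_colouring (cube d) (\<lambda>x y. cube_adj x y \<or> y = map Not x) 3 c"
  then have col: "proper_colouring (cube d) cube_adj 3 c"
    unfolding proper_colouring_def by blast
  have antipodal: "c (map Not x) \<noteq> c x" if "length x = d" for x
  proof -
    have "x \<in> cube d" "map Not x \<in> cube d" using that by (simp_all add: cube_def)
    then show ?thesis using antipodal_col unfolding proper_colouring_def by metis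
  qed
  have gap_nonzero: "antipodal_gap c x \<noteq> 0" if "length x = d" for x
    using antipodal_gap_not_dvd_3[of x c] col antipodal[OF that] that by fastforce
  have sign_toggle: "0 < antipodal_gap c u \<longleftrightarrow> 0 < antipodal_gap c (toggle i u)"
    if u: "length u = d" "i < d" for u i
  proof (rule even_nonzero_close_same_sign)
    show "even (antipodal_gap c u)" "even (antipodal_gap c (toggle i u))"
      using even_antipodal_gap assms u by simp_all
    show "antipodal_gap c u \<noteq> 0" "antipodal_gap c (toggle i u) \<noteq> 0"
      using gap_nonzero u by simp_all
    show "\<bar>antipodal_gap c (toggle i u) - antipodal_gap c u\<bar> \<le> 2"
      using antipodal_gap_toggle col u by simp
  qed
  let ?z = "replicate d False"
  have "0 < antipodal_gap c (map Not ?z) \<longleftrightarrow> 0 < antipodal_gap c ?z"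
  proof (rule toggle_connected[where P = "\<lambda>u. 0 < antipodal_gap c u \<longleftrightarrow> 0 < antipodal_gap c ?z"])
    show "0 < antipodal_gap c (toggle i u) \<longleftrightarrow> 0 < antipodal_gap c ?z"
      if "length u = d" "i < d" "0 < antipodal_gap c u \<longleftrightarrow> 0 < antipodal_gap c ?z" for u i
      using sign_toggle[OF that(1,2)] that(3) by blast
  qed simp_all
  then show False
    using antipodal_gap_map_Not[of c ?z] gap_nonzero[of ?z] by auto
qed

section \<open>Embedding the antipodal cube into H_2(n,n-1)\<close>

lemma hamming_self [simp]: "hamming x x = 0"
  by (simp add: hamming_def)

lemma hamming_append_same:
  "length x = length y \<Longrightarrow> hamming (x @ z) (y @ z) = hamming x y"
  unfolding hamming_def by (rule arg_cong[where f = card]) (auto simp: nth_append)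

lemma hamming_map_Not_left:
  assumes "length x = length y"
  shows "hamming (map Not x) y = length x - hamming x y"
proof -
  have "hamming (map Not x) y = card ({..<length x} - {i. i < length x \<and> x ! i \<noteq> y ! i})"
    unfolding hamming_def by (rule arg_cong[where f = card]) auto
  also have "\<dots> = length x - hamming x y"
    unfolding hamming_def by (subst card_Diff_subset) auto
  finally show ?thesis .
qed

lemma hamming_map_Not_right:
  assumes "length x = length y"
  shows "hamming x (map Not y) = length x - hamming x y"
proof -
  have "hamming x (map Not y) = card ({..<length x} - {i. i < length x \<and> x ! i \<noteq> y ! i})"
    unfolding hamming_def using assms by (intro arg_cong[where f = card]) auto
  also have "\<dots> = length x - hamming x y"
    unfolding hamming_def by (subst card_Diff_subset) auto
  finally show ?thesis .
qed

lemma hamming_map_Not_map_Not: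
  "length x = length y \<Longrightarrow> hamming (map Not x) (map Not y) = hamming x y"
  unfolding hamming_def by (rule arg_cong[where f = card]) auto

lemma hamming_toggle: "i < length x \<Longrightarrow> hamming x (toggle i x) = 1"
proof -
  assume "i < length x"
  then have "{j. j < length x \<and> x ! j \<noteq> toggle i x ! j} = {i}"
    by (auto simp: toggle_def nth_list_update)
  then show ?thesis by (simp add: hamming_def)
qed

lemma hamming_map_Not_self: "hamming x (map Not x) = length x"
proof -
  have "{i. i < length x \<and> x ! i \<noteq> map Not x ! i} = {..<length x}"
    by auto
  then show ?thesis by (simp add: hamming_def)
qed

lemma H2_adjI: "length u = n \<Longrightarrow> n - 1 \<le> hamming u v \<Longrightarrow> 0 < hamming u v \<Longrightarrow> H2_adj n u v"
  unfolding H2_adj_def by auto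

lemma weight_toggle: "i < length x \<Longrightarrow> odd (weight (toggle i x)) \<longleftrightarrow> even (weight x)"
proof (induction x arbitrary: i)
  case (Cons b x)
  then show ?case by (cases i) (auto simp: weight_def)
qed simp

definition cube_embed :: "nat \<Rightarrow> bool list \<Rightarrow> bool list" where
  "cube_embed n x = (if odd (weight x) then map Not else id) (x @ replicate (n - length x) False)"

lemma length_cube_embed: "length x \<le> n \<Longrightarrow> length (cube_embed n x) = n"
  by (simp add: cube_embed_def)

lemma hamming_cube_embed_toggle:
  assumes "length x \<le> n" "i < length x"
  shows "hamming (cube_embed n x) (cube_embed n (toggle i x)) = n - 1"
proof -
  define p where "p = x @ replicate (n - length x) False"
  define q where "q = toggle i x @ replicate (n - length x) False"
  have len: "length p = n" "length q = length p" using assms(1) by (simp_all add: p_def q_def)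
  have "q = toggle i p"
    using assms(2) by (simp add: p_def q_def toggle_def list_update_append nth_append)
  then have one: "hamming p q = 1"
    using hamming_toggle[of i p] assms(2) by (simp add: p_def)
  have embed_x: "cube_embed n x = (if odd (weight x) then map Not p else p)"
    and embed_toggle: "cube_embed n (toggle i x) = (if odd (weight x) then q else map Not q)"
    using weight_toggle[OF assms(2)] by (simp_all add: cube_embed_def p_def q_def)
  show ?thesis
  proof (cases "odd (weight x)")
    case True
    then show ?thesis
      using hamming_map_Not_left[OF len(2)[symmetric]] one len by (simp add: embed_x embed_toggle)
  next
    case False
    then show ?thesis
      using hamming_map_Not_right[OF len(2)[symmetric]] one len by (simp add: embed_x embed_toggle)
  qed
qed

lemma hamming_cube_embed_map_Not:
  assumes "length x \<le> n" "even (length x)"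
  shows "hamming (cube_embed n x) (cube_embed n (map Not x)) = length x"
proof -
  define p where "p = x @ replicate (n - length x) False"
  define q where "q = map Not x @ replicate (n - length x) False"
  have "odd (weight (map Not x)) \<longleftrightarrow> odd (weight x)"
    using weight_map_Not[of x] assms(2) by (metis even_add)
  then have "hamming (cube_embed n x) (cube_embed n (map Not x)) = hamming p q"
    using hamming_map_Not_map_Not[of p q] by (simp add: cube_embed_def p_def q_def)
  also have "\<dots> = length x"
    using hamming_append_same[of x "map Not x"] hamming_map_Not_self[of x] by (simp add: p_def q_def)
  finally show ?thesis .
qed

lemma H2_adj_cube_embed:
  assumes "2 \<le> n" "length x \<le> n" "n - 1 \<le> length x" "even (length x)"
    and "cube_adj x y \<or> y = map Not x"
  shows "H2_adj n (cube_embed n x) (cube_embed n y)"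
  using assms(5)
proof
  assume "cube_adj x y"
  then obtain i where "i < length x" "y = toggle i x" by (auto simp: cube_adj_def)
  then show ?thesis
    using hamming_cube_embed_toggle[OF assms(2)] length_cube_embed[OF assms(2)] assms(1)
    by (intro H2_adjI) simp_all
next
  assume "y = map Not x"
  moreover have "0 < length x" using assms(1,3) by linarith
  ultimately show ?thesis
    using hamming_cube_embed_map_Not[OF assms(2,4)] length_cube_embed[OF assms(2)] assms(3)
    by (intro H2_adjI) simp_all
qed

lemma H2_colouring_ge_4:
  assumes "2 \<le> n" and col: "proper_colouring (cube n) (H2_adj n) k c"
  shows "4 \<le> k"
proof (rule ccontr)
  assume "\<not> 4 \<le> k"
  then have col3: "proper_colouring (cube n) (H2_adj n) 3 c"
    using proper_colouring_mono[OF col] by simp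
  define d where "d = 2 * (n div 2)"
  have d: "even d" "d \<le> n" "n - 1 \<le> d" unfolding d_def by auto
  have "proper_colouring (cube d) (\<lambda>x y. cube_adj x y \<or> y = map Not x) 3 (c \<circ> cube_embed n)"
  proof (rule proper_colouring_hom[OF col3])
    show "cube_embed n ` cube d \<subseteq> cube n"
      using length_cube_embed d by (auto simp: cube_def)
    show "H2_adj n (cube_embed n x) (cube_embed n y)"
      if "x \<in> cube d" "y \<in> cube d" "cube_adj x y \<or> y = map Not x" for x y
      using H2_adj_cube_embed[OF assms(1)] that d by (simp add: cube_def)
  qed
  then show False using no_antipodal_cube_3_colouring[OF d(1)] by blast
qed

section \<open>A 4-colouring\<close>

definition first_two_bits :: "bool list \<Rightarrow> nat" where
  "first_two_bits x = 2 * of_bool (x ! 0) + of_bool (x ! 1)"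

lemma proper_colouring_first_two_bits:
  assumes "2 \<le> n"
  shows "proper_colouring (cube n) (H2_adj n) 4 first_two_bits"
  unfolding proper_colouring_def
proof (intro conjI ballI impI)
  fix v show "first_two_bits v < 4" by (simp add: first_two_bits_def)
next
  fix u v assume u: "u \<in> cube n" and adj: "H2_adj n u v"
  show "first_two_bits u \<noteq> first_two_bits v"
  proof
    assume "first_two_bits u = first_two_bits v"
    then have agree: "u ! 0 = v ! 0" "u ! 1 = v ! 1"
      unfolding first_two_bits_def by (cases "u ! 0"; cases "u ! 1"; cases "v ! 0"; cases "v ! 1"; simp)+
    have "i \<noteq> 0" "i \<noteq> 1" if "u ! i \<noteq> v ! i" for i
      using that agree by metis+
    then have "{i. i < length u \<and> u ! i \<noteq> v ! i} \<subseteq> {2..<n}"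
      using u by (force simp: cube_def)
    then have "hamming u v \<le> n - 2"
      unfolding hamming_def by (metis card_atLeastLessThan card_mono finite_atLeastLessThan)
    then show False using adj assms unfolding H2_adj_def by linarith
  qed
qed

theorem theorem3p3:
  fixes n :: nat
  assumes "n \<ge> 2"
  shows "chromatic_number (cube n) (H2_adj n) = 4"
  by (rule chromatic_number_eqI[OF proper_colouring_first_two_bits[OF assms] H2_colouring_ge_4[OF assms]])

end
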